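(* The minimal functor $\mathcal M_{\min}$ is (admits the structure of) a lax monoidal functor from $(\mathbf{Ord},\times,(\mathbf 1,=))$ to $(\mathbf{Set},\times,\mathbf 1)$.
   Context: $\mathbf{Ord}$ is the category of posets and monotone maps, with cartesian product $\times$ (product order) and the one-point poset $\mathbf 1$; $\mathbf{Set}$ has the cartesian monoidal structure. For a poset $X$, $\mathcal M(X)$ is the set of nonempty finite subsets of $X$ whose elements are pairwise incomparable. For $S\subseteq X$, $S_{\circ}$ denotes the set of minimal elements of $S$. The minimal functor $\mathcal M_{\min}:\mathbf{Ord}\to\mathbf{Set}$ is given by $\mathcal M_{\min}(X)=\mathcal M(X)$ (as a set) and $\mathcal M_{\min}(f)(S)=(f(S))_{\circ}$ for monotone $f:X\to Y$. *)

theory Defs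
  imports Main "HOL-Library.Product_Order"
begin

text \<open>Posets are modelled as types of class order; monotone maps are functions f with mono f.
 The product of posets is the product type with the componentwise (product) order from
 HOL-Library.Product_Order; the one-point poset is the type unit.\<close>

definition minimals :: "'a::order set \<Rightarrow> 'a set" where
  "minimals S = {x \<in> S. \<not> (\<exists>y\<in>S. y < x)}"

definition Mset :: "'a::order set set" where
  "Mset = {S. S \<noteq> {} \<and> finite S \<and>
              (\<forall>x\<in>S. \<forall>y\<in>S. x \<noteq> y \<longrightarrow> \<not> x \<le> y \<and> \<not> y \<le> x)}"

definition Mmin :: "('a::order \<Rightarrow> 'b::order) \<Rightarrow> 'a set \<Rightarrow> 'b set" where
  "Mmin f S = minimals (f ` S)"

definition Mmu :: "'a set \<Rightarrow> 'b set \<Rightarrow> ('a \<times> 'b) set" where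
  "Mmu S T = S \<times> T"

definition Meta :: "unit \<Rightarrow> unit set" where
  "Meta u = {()}"

end

theory Submission
  imports Defs
begin

text \<open>Every element of a finite poset lies above a minimal one. For monotone \<open>g\<close> this means
  that discarding the non-minimal elements of \<open>A\<close> before applying \<open>g\<close> does not change the
  minimal elements of the image, which is functoriality of \<open>Mmin\<close>. In the product order the
  minimal elements of \<open>A \<times> B\<close> are exactly the pairs of minimal elements, which makes the
  cartesian product of antichains a natural multiplication; the associator and unitors map
  antichains onto antichains, so taking minimal elements does not alter their images.\<close>

lemma minimals_subset: "minimals A \<subseteq> A"
  unfolding minimals_def by auto

lemma minimals_Mset:
  fixes S :: "'a::order set"
  assumes "S \<in> Mset"
  shows "minimals S = S"
  using assms unfolding Mset_def minimals_def by (auto simp: less_le)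

lemma Mset_minimals:
  fixes A :: "'a::order set"
  assumes "finite A" "A \<noteq> {}"
  shows "minimals A \<in> Mset"
proof -
  obtain m where "m \<in> A" "\<forall>b\<in>A. b \<le> m \<longrightarrow> m = b"
    using finite_has_minimal[OF assms] by blast
  then have "m \<in> minimals A"
    unfolding minimals_def by (auto simp: less_le)
  then show ?thesis
    using assms unfolding Mset_def minimals_def by (auto simp: less_le)
qed

lemma minimals_below:
  fixes A :: "'a::order set"
  assumes "finite A" "a \<in> A"
  obtains m where "m \<in> minimals A" "m \<le> a"
proof -
  obtain m where "m \<in> A" "m \<le> a" "\<forall>b\<in>A. b \<le> m \<longrightarrow> m = b"
    using finite_has_minimal2[OF assms] by blast
  then show ?thesis
    using that unfolding minimals_def by (auto simp: less_le)
qed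

lemma minimals_image_minimals:
  fixes A :: "'a::order set" and g :: "'a \<Rightarrow> 'b::order"
  assumes "finite A" "mono g"
  shows "minimals (g ` minimals A) = minimals (g ` A)"
proof -
  have below: "\<exists>y \<in> g ` minimals A. y \<le> g a" if a: "a \<in> A" for a
  proof -
    obtain m where "m \<in> minimals A" "m \<le> a"
      using minimals_below[OF assms(1) a] by blast
    then show ?thesis
      using \<open>mono g\<close> by (auto dest: monoD)
  qed
  have sub: "g ` minimals A \<subseteq> g ` A"
    using minimals_subset by blast
  show ?thesis
  proof (intro equalityI subsetI)
    fix z assume z: "z \<in> minimals (g ` minimals A)"
    have "\<not> y < z" if "y \<in> g ` A" for y
    proof
      assume "y < z"
      obtain y' where "y' \<in> g ` minimals A" "y' \<le> y"
        using below \<open>y \<in> g ` A\<close> by blast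
      with \<open>y < z\<close> z show False
        unfolding minimals_def by (auto dest: le_less_trans)
    qed
    then show "z \<in> minimals (g ` A)"
      using z sub unfolding minimals_def by blast
  next
    fix z assume z: "z \<in> minimals (g ` A)"
    then obtain a where "a \<in> A" "z = g a"
      unfolding minimals_def by auto
    then obtain y where y: "y \<in> g ` minimals A" "y \<le> z"
      using below by blast
    with z sub have "y = z"
      unfolding minimals_def by (auto simp: less_le)
    with y z sub show "z \<in> minimals (g ` minimals A)"
      unfolding minimals_def by blast
  qed
qed

lemma minimals_Times:
  fixes A :: "'a::order set" and B :: "'b::order set"
  shows "minimals (A \<times> B) = minimals A \<times> minimals B"
  unfolding minimals_def
  by (auto simp: less_prod_def less_le) (metis order.refl)+

lemma Mset_Times:
  fixes S :: "'a::order set" and T :: "'b::order set"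
  assumes "S \<in> Mset" "T \<in> Mset"
  shows "S \<times> T \<in> Mset"
  using assms unfolding Mset_def by auto

lemma Mset_finite: "S \<in> Mset \<Longrightarrow> finite S"
  unfolding Mset_def by blast

lemma Mset_unit: "{()} \<in> Mset"
  unfolding Mset_def by auto

lemma Mmin_in_Mset:
  fixes f :: "'a::order \<Rightarrow> 'b::order"
  assumes "S \<in> Mset"
  shows "Mmin f S \<in> Mset"
  unfolding Mmin_def using assms by (intro Mset_minimals) (auto simp: Mset_def)

lemma Mmin_id: "S \<in> Mset \<Longrightarrow> Mmin id S = S"
  unfolding Mmin_def by (simp add: minimals_Mset)

lemma Mmin_comp:
  fixes f :: "'a::order \<Rightarrow> 'b::order" and g :: "'b \<Rightarrow> 'c::order"
  assumes "mono g" "finite S"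
  shows "Mmin (g \<circ> f) S = Mmin g (Mmin f S)"
  using minimals_image_minimals[of "f ` S" g] assms
  unfolding Mmin_def by (simp add: image_comp)

lemma Mmin_map_prod:
  "Mmin (map_prod f g) (S \<times> T) = Mmin f S \<times> Mmin g T"
  unfolding Mmin_def by (simp add: map_prod_surj_on minimals_Times)

lemma Mmin_eq_image: "f ` S \<in> Mset \<Longrightarrow> Mmin f S = f ` S"
  unfolding Mmin_def by (rule minimals_Mset)

theorem propositionD20:
  shows
  \<comment> \<open>M_min is a functor Ord -> Set\<close>
  "(\<forall>(f::'a::order \<Rightarrow> 'b::order). mono f \<longrightarrow> (\<forall>S\<in>Mset. Mmin f S \<in> Mset))
   \<and> (\<forall>S\<in>(Mset :: 'a::order set set). Mmin id S = S)
   \<and> (\<forall>(f::'a::order \<Rightarrow> 'b::order) (g::'b \<Rightarrow> 'c::order). mono f \<longrightarrow> mono g \<longrightarrow>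
        (\<forall>S\<in>Mset. Mmin (g \<circ> f) S = Mmin g (Mmin f S)))
   \<and> (\<forall>S\<in>(Mset :: 'a::order set set). \<forall>T\<in>(Mset :: 'b::order set set). Mmu S T \<in> Mset)
   \<and> Meta () \<in> Mset
   \<and> (\<forall>(f::'a::order \<Rightarrow> 'c::order) (g::'b::order \<Rightarrow> 'd::order). mono f \<longrightarrow> mono g \<longrightarrow>
        (\<forall>S\<in>Mset. \<forall>T\<in>Mset. Mmin (map_prod f g) (Mmu S T) = Mmu (Mmin f S) (Mmin g T)))
   \<and> (\<forall>S\<in>(Mset :: 'a::order set set). \<forall>T\<in>(Mset :: 'b::order set set).
        \<forall>U\<in>(Mset :: 'c::order set set).
        Mmin (\<lambda>((x, y), z). (x, (y, z))) (Mmu (Mmu S T) U) = Mmu S (Mmu T U))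
   \<and> (\<forall>S\<in>(Mset :: 'a::order set set). Mmin snd (Mmu (Meta ()) S) = S)
   \<and> (\<forall>S\<in>(Mset :: 'a::order set set). Mmin fst (Mmu S (Meta ())) = S)"
proof -
  have assoc: "(\<lambda>((x, y), z). (x, (y, z))) ` ((S \<times> T) \<times> U) = S \<times> (T \<times> U)"
    for S :: "'a set" and T :: "'b set" and U :: "'c set"
    by force
  have unit_left: "snd ` ({()} \<times> S) = S" and unit_right: "fst ` (S \<times> {()}) = S"
    for S :: "'a set"
    by force+
  show ?thesis
    unfolding Mmu_def Meta_def
    by (auto simp: Mmin_in_Mset Mmin_id Mmin_comp Mset_finite Mset_Times Mset_unit
        Mmin_map_prod Mmin_eq_image assoc unit_left unit_right)
qed

end
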